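(* Let $$\mathcal{X} = \left\{(A, B) \in M_4(\mathbb{C}) \times M_4(\mathbb{C}) : \operatorname{Tr} A = \operatorname{Tr} B = 0,\ \|A\|_F^2 + \|B\|_F^2 = \tfrac{1}{4}\right\},$$ and let $\mathcal{Y} \subseteq \mathcal{X}$ be the set of those $(A,B) \in \mathcal{X}$ such that $A$ has four pairwise distinct eigenvalues and $B$ has four pairwise distinct eigenvalues. For $(A,B)$ put $X = A \otimes I_4 + I_4 \otimes B \in M_{16}(\mathbb{C})$ and $\phi(A,B) = \sigma_1(X)^2 + \sigma_2(X)^2$, where $\sigma_1(X)\ge\sigma_2(X)$ are the two largest singular values of $X$. Then $\phi(A,B) \leq \frac{1}{2}$ for all $(A,B) \in \mathcal{X}$ if and only if $\phi(A,B) \leq \frac12$ for all $(A,B) \in \mathcal{Y}$.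
   Context: $\|\cdot\|_F$ denotes the Frobenius norm, $\|A\|_F = (\operatorname{Tr}(A^*A))^{1/2}$. $\otimes$ denotes the Kronecker product. *)

theory Defs
  imports "Jordan_Normal_Form.Schur_Decomposition" "HOL-Library.Multiset"
begin

definition mat_tr :: "complex mat \<Rightarrow> complex" where
  "mat_tr A = (\<Sum>i<dim_row A. A $$ (i, i))"

(* Frobenius norm: ||A||_F = (Tr (A^* A))^(1/2); Tr(A^* A) is a nonnegative real *)
definition frob_norm :: "complex mat \<Rightarrow> real" where
  "frob_norm A = sqrt (Re (mat_tr (mat_adjoint A * A)))"

definition kron :: "complex mat \<Rightarrow> complex mat \<Rightarrow> complex mat" where
  "kron A B = mat (dim_row A * dim_row B) (dim_col A * dim_col B)
     (\<lambda>(i, j). A $$ (i div dim_row B, j div dim_col B) * B $$ (i mod dim_row B, j mod dim_col B))"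

(* Singular values of X (square), in non-increasing order, with multiplicity:
   square roots of the eigenvalues (roots of the characteristic polynomial,
   counted with multiplicity) of the Hermitian PSD matrix X^* X. *)
definition singular_values :: "complex mat \<Rightarrow> real list" where
  "singular_values X =
     rev (sorted_list_of_multiset
       (image_mset (\<lambda>z. sqrt (Re z)) (proots (char_poly (mat_adjoint X * X)))))"

definition sigma :: "complex mat \<Rightarrow> nat \<Rightarrow> real" where
  "sigma X k = singular_values X ! (k - 1)"

definition phi :: "complex mat \<Rightarrow> complex mat \<Rightarrow> real" where
  "phi A B = (let X = kron A (1\<^sub>m 4) + kron (1\<^sub>m 4) B in (sigma X 1)^2 + (sigma X 2)^2)"

definition calX :: "(complex mat \<times> complex mat) set" where
  "calX = {(A, B). A \<in> carrier_mat 4 4 \<and> B \<in> carrier_mat 4 4 \<and>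
             mat_tr A = 0 \<and> mat_tr B = 0 \<and> (frob_norm A)^2 + (frob_norm B)^2 = 1/4}"

definition calY :: "(complex mat \<times> complex mat) set" where
  "calY = {(A, B). (A, B) \<in> calX \<and> card {z. eigenvalue A z} = 4 \<and> card {z. eigenvalue B z} = 4}"

end

theory Submission
  imports Defs
begin

text \<open>Suppose \<open>\<phi>(A, B) > 1/2\<close> for some \<open>(A, B) \<in> \<X>\<close>. The quantity
  \<open>\<sigma>\<^sub>1(X)\<^sup>2 + \<sigma>\<^sub>2(X)\<^sup>2\<close> is the maximum of \<open>\<parallel>X u\<parallel>\<^sup>2 + \<parallel>X v\<parallel>\<^sup>2\<close> over orthonormal pairs
  \<open>(u, v)\<close> (Ky Fan), so it is lower semicontinuous in \<open>X\<close>, and so is \<open>\<phi>\<close>. Triangularising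
  \<open>A\<close> and adding \<open>e\<close> times a traceless diagonal matrix with distinct entries gives distinct
  eigenvalues for all small \<open>e \<noteq> 0\<close>; doing this to \<open>A\<close> and \<open>B\<close> and rescaling back to
  \<open>\<parallel>A\<parallel>\<^sub>F\<^sup>2 + \<parallel>B\<parallel>\<^sub>F\<^sup>2 = 1/4\<close> yields points of \<open>\<Y>\<close> arbitrarily close to \<open>(A, B)\<close>, where
  \<open>\<phi>\<close> must still exceed \<open>1/2\<close>.\<close>

section \<open>Adjoints, norms and unitary matrices\<close>

lemma mat_adjoint_dim [simp]:
  "dim_row (mat_adjoint A) = dim_col A" "dim_col (mat_adjoint A) = dim_row A"
  unfolding mat_adjoint_def by auto

lemma carrier_mat_adjoint [simp]: "A \<in> carrier_mat n m \<Longrightarrow> mat_adjoint A \<in> carrier_mat m n"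
  unfolding carrier_mat_def by auto

lemma index_mat_adjoint [simp]:
  "i < dim_col A \<Longrightarrow> j < dim_row A \<Longrightarrow> mat_adjoint A $$ (i, j) = cnj (A $$ (j, i))"
  unfolding mat_adjoint_def by (simp add: mat_of_rows_index)

lemma mat_adjoint_adjoint [simp]: "mat_adjoint (mat_adjoint (A :: complex mat)) = A"
  by (rule eq_matI) auto

lemma mat_adjoint_one [simp]: "mat_adjoint (1\<^sub>m n :: complex mat) = 1\<^sub>m n"
  by (rule eq_matI) auto

lemma mat_adjoint_mult:
  assumes "(A :: complex mat) \<in> carrier_mat n m" "B \<in> carrier_mat m k"
  shows "mat_adjoint (A * B) = mat_adjoint B * mat_adjoint A"
  using assms by (intro eq_matI) (auto simp: scalar_prod_def sum_conjugate[symmetric] ac_simps)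

lemma cscalar_prod_eq_sum:
  "u \<in> carrier_vec n \<Longrightarrow> v \<in> carrier_vec n \<Longrightarrow> u \<bullet>c v = (\<Sum>i<n. u $ i * cnj (v $ i))"
  by (auto simp: scalar_prod_def lessThan_atLeast0)

definition sq_norm_vec :: "complex vec \<Rightarrow> real" where
  "sq_norm_vec x = Re (x \<bullet>c x)"

lemma cscalar_prod_self_eq: "x \<bullet>c x = complex_of_real (sq_norm_vec x)"
  using conjugate_square_ge_0_vec[of x] by (simp add: sq_norm_vec_def less_eq_complex_def complex_eq_iff)

lemma sq_norm_vec_nonneg: "0 \<le> sq_norm_vec x"
  using conjugate_square_ge_0_vec[of x] by (simp add: sq_norm_vec_def less_eq_complex_def)

lemma sq_norm_vec_pos: "x \<in> carrier_vec n \<Longrightarrow> x \<noteq> 0\<^sub>v n \<Longrightarrow> 0 < sq_norm_vec x"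
  using conjugate_square_greater_0_vec[of x n] by (simp add: sq_norm_vec_def less_complex_def)

lemma sq_norm_vec_eq_sum: "x \<in> carrier_vec n \<Longrightarrow> sq_norm_vec x = (\<Sum>i<n. (cmod (x $ i))\<^sup>2)"
  unfolding sq_norm_vec_def
  by (simp add: cscalar_prod_eq_sum flip: complex_norm_square)

lemma cscalar_prod_mult_mat_vec:
  assumes A: "(A :: complex mat) \<in> carrier_mat n m" and x: "x \<in> carrier_vec m" and y: "y \<in> carrier_vec n"
  shows "(A *\<^sub>v x) \<bullet>c y = x \<bullet>c (mat_adjoint A *\<^sub>v y)"
proof -
  have "(A *\<^sub>v x) \<bullet>c y = (\<Sum>i<n. (\<Sum>j<m. A $$ (i, j) * x $ j) * cnj (y $ i))"
    using A x y by (auto simp: scalar_prod_def lessThan_atLeast0)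
  also have "\<dots> = (\<Sum>j<m. x $ j * cnj (\<Sum>i<n. cnj (A $$ (i, j)) * y $ i))"
    by (simp add: sum_distrib_left sum_distrib_right ac_simps sum.swap[of _ "{..<n}"])
  also have "\<dots> = x \<bullet>c (mat_adjoint A *\<^sub>v y)"
    using A x y by (auto simp: scalar_prod_def lessThan_atLeast0)
  finally show ?thesis .
qed

definition vec_normalize :: "complex vec \<Rightarrow> complex vec" where
  "vec_normalize w = complex_of_real (1 / sqrt (sq_norm_vec w)) \<cdot>\<^sub>v w"

lemma vec_normalize_carrier [simp]: "w \<in> carrier_vec n \<Longrightarrow> vec_normalize w \<in> carrier_vec n"
  unfolding vec_normalize_def by auto

lemma cscalar_prod_vec_normalize:
  assumes "w \<in> carrier_vec n" "v \<in> carrier_vec n"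
  shows "vec_normalize w \<bullet>c vec_normalize v
           = complex_of_real (1 / sqrt (sq_norm_vec w) * (1 / sqrt (sq_norm_vec v))) * (w \<bullet>c v)"
  using assms unfolding vec_normalize_def by (simp add: conjugate_smult_vec)

lemma vec_normalize_unit:
  assumes w: "w \<in> carrier_vec n" and w0: "w \<noteq> 0\<^sub>v n"
  shows "vec_normalize w \<bullet>c vec_normalize w = 1"
  unfolding cscalar_prod_vec_normalize[OF w w] cscalar_prod_self_eq[of w]
  using sq_norm_vec_pos[OF w w0] by (simp flip: of_real_mult add: real_sqrt_mult[symmetric])

lemma corthogonal_map_vec_normalize:
  assumes ws: "corthogonal ws" "set ws \<subseteq> carrier_vec n"
  shows "corthogonal (map vec_normalize ws)"
    and "\<And>w. w \<in> set (map vec_normalize ws) \<Longrightarrow> w \<bullet>c w = 1"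
proof -
  have nz: "ws ! i \<noteq> 0\<^sub>v n" and c: "ws ! i \<in> carrier_vec n" if "i < length ws" for i
    using corthogonalD[OF ws(1) that that] ws(2) that by auto
  show "corthogonal (map vec_normalize ws)"
  proof (rule corthogonalI)
    fix i j assume "i < length (map vec_normalize ws)" "j < length (map vec_normalize ws)"
    then show "map vec_normalize ws ! i \<bullet>c map vec_normalize ws ! j = 0 \<longleftrightarrow> i \<noteq> j"
      using corthogonalD[OF ws(1)] vec_normalize_unit[OF c nz] cscalar_prod_vec_normalize[OF c c]
      by (cases "i = j") auto
  qed
  show "w \<bullet>c w = 1" if "w \<in> set (map vec_normalize ws)" for w
    using that vec_normalize_unit[OF c nz] by (auto simp: in_set_conv_nth)
qed

definition unitary_mat :: "nat \<Rightarrow> complex mat \<Rightarrow> bool" where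
  "unitary_mat n U \<longleftrightarrow> U \<in> carrier_mat n n \<and> mat_adjoint U * U = 1\<^sub>m n \<and> U * mat_adjoint U = 1\<^sub>m n"

lemma unitary_mat_if_similar_mat_wit:
  "A \<in> carrier_mat n n \<Longrightarrow> similar_mat_wit A B P (mat_adjoint P) \<Longrightarrow> unitary_mat n P"
  unfolding unitary_mat_def using similar_mat_witD2(1,2,6) by metis

section \<open>Unitary triangularisation and the spectral theorem\<close>

lemma orthonormal_basis_completion:
  assumes v: "(v :: complex vec) \<in> carrier_vec n" "v \<noteq> 0\<^sub>v n"
  obtains ws where "set ws \<subseteq> carrier_vec n" "length ws = n" "corthogonal ws"
    "\<And>w. w \<in> set ws \<Longrightarrow> w \<bullet>c w = 1" "hd ws = vec_normalize v"
proof -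
  interpret cof_vec_space n "TYPE(complex)" .
  define b where "b = basis_completion v"
  from basis_completion[OF v, folded b_def]
  have b: "set b \<subseteq> carrier_vec n" "distinct b" "\<not> lin_dep (set b)" "length b = n" "hd b = v"
    by auto
  from v have "n \<noteq> 0" by auto
  with b obtain vs where bv: "b = v # vs" by (cases b) auto
  define ws0 where "ws0 = gram_schmidt n b"
  from gram_schmidt_result[OF b(1-3) ws0_def]
  have ws0: "set ws0 \<subseteq> carrier_vec n" "corthogonal ws0" "length ws0 = n"
    using b(4) by auto
  have "hd ws0 = v" unfolding ws0_def bv using v by simp
  with ws0 \<open>n \<noteq> 0\<close> have "hd (map vec_normalize ws0) = vec_normalize v" by (cases ws0) auto
  with ws0 corthogonal_map_vec_normalize[OF ws0(2,1)] show ?thesis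
    by (intro that[of "map vec_normalize ws0"]) auto
qed

lemma unitary_deflation:
  assumes A: "(A :: complex mat) \<in> carrier_mat n n" and e: "eigenvalue A e"
  obtains W where "similar_mat_wit A (mat_adjoint W * A * W) W (mat_adjoint W)"
    and "col (mat_adjoint W * A * W) 0 = vec n (\<lambda>i. if i = 0 then e else 0)"
proof -
  obtain v where v: "v \<in> carrier_vec n" "v \<noteq> 0\<^sub>v n" and Av: "A *\<^sub>v v = e \<cdot>\<^sub>v v"
    using e A unfolding eigenvalue_def eigenvector_def by auto
  obtain ws where ws: "set ws \<subseteq> carrier_vec n" "length ws = n" "corthogonal ws"
    and unit: "\<And>w. w \<in> set ws \<Longrightarrow> w \<bullet>c w = 1" and hd: "hd ws = vec_normalize v"
    using orthonormal_basis_completion[OF v] by blast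
  from v have "n \<noteq> 0" by auto
  define W where "W = mat_of_cols n ws"
  have W: "W \<in> carrier_mat n n" unfolding W_def using ws by auto
  have "map vec_inv (cols W) = map conjugate (cols W)"
    using ws unit unfolding W_def by (intro map_cong) (auto simp: vec_inv_def)
  then have inv: "corthogonal_inv W = mat_adjoint W"
    unfolding corthogonal_inv_def mat_adjoint_def by (simp only:)
  have WW: "mat_adjoint W * W = 1\<^sub>m n"
    using corthogonal_inv_result[OF orthogonal_mat_of_cols[OF ws(1,3,2)]] W
    unfolding inv W_def[symmetric] inverts_mat_def by auto
  then have WW': "W * mat_adjoint W = 1\<^sub>m n"
    using mat_mult_left_right_inverse[OF carrier_mat_adjoint[OF W] W] W by auto
  have "similar_mat_wit (mat_adjoint W * A * W) A (mat_adjoint W) W"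
    using W A WW WW' by (intro similar_mat_witI[of _ _ n]) auto
  then have "similar_mat_wit A (mat_adjoint W * A * W) W (mat_adjoint W)"
    by (rule similar_mat_wit_sym)
  moreover have "vec_normalize v \<noteq> 0\<^sub>v n"
    using vec_normalize_unit[OF v] v(1) by auto
  moreover have "A *\<^sub>v vec_normalize v = e \<cdot>\<^sub>v vec_normalize v"
    unfolding vec_normalize_def using A v Av by (simp add: mult_mat_vec smult_smult_assoc mult.commute)
  ultimately show ?thesis
    using corthogonal_col_ev_0[OF A _ _ _ _ hd ws(1,3,2)] v ws \<open>n \<noteq> 0\<close> that
    unfolding W_def[symmetric] inv by (metis vec_normalize_carrier)
qed

lemma four_block_of_first_col:
  assumes A: "A \<in> carrier_mat n n" and n: "n \<noteq> 0"
    and col0: "col A 0 = vec n (\<lambda>i. if i = 0 then e else 0)"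
  obtains A2 A3 where "A2 \<in> carrier_mat 1 (n - 1)" "A3 \<in> carrier_mat (n - 1) (n - 1)"
    "A = four_block_mat (mat 1 1 (\<lambda>_. e)) A2 (0\<^sub>m (n - 1) 1) A3"
proof -
  obtain A1 A2 A0 A3 where split: "split_block A 1 1 = (A1, A2, A0, A3)"
    by (cases "split_block A 1 1") auto
  from A n have "dim_row A = 1 + (n - 1)" "dim_col A = 1 + (n - 1)" by auto
  from split_block[OF split this]
  have blocks: "A2 \<in> carrier_mat 1 (n - 1)" "A3 \<in> carrier_mat (n - 1) (n - 1)"
    "A = four_block_mat A1 A2 A0 A3" by auto
  have "A1 = mat 1 1 (\<lambda>_. e)"
    using split arg_cong[OF col0, of "\<lambda>v. v $ 0"] A n
    by (auto simp: split_block_def Let_def col_def)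
  moreover have "A $$ (Suc i, 0) = 0" if "i < n - 1" for i
    using arg_cong[OF col0, of "\<lambda>v. v $ Suc i"] A that by auto
  then have "A0 = 0\<^sub>m (n - 1) 1"
    using split A by (auto simp: split_block_def Let_def)
  ultimately show ?thesis using blocks that by simp
qed

lemma char_poly_four_block_scalar:
  assumes "A2 \<in> carrier_mat 1 m" "A3 \<in> carrier_mat m m"
  shows "char_poly (four_block_mat (mat 1 1 (\<lambda>_. e)) A2 (0\<^sub>m m 1) A3) = [:- e, 1:] * char_poly A3"
  by (subst char_poly_four_block_zeros_col[OF _ assms]) (auto simp: char_poly_defs det_def sign_def)

lemma similar_mat_wit_four_block_unitary:
  assumes simP: "similar_mat_wit (A3 :: complex mat) B P (mat_adjoint P)"
    and A2: "A2 \<in> carrier_mat 1 m" and A3: "A3 \<in> carrier_mat m m"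
  defines "P1 \<equiv> four_block_mat (1\<^sub>m 1) (0\<^sub>m 1 m) (0\<^sub>m m 1) P"
  shows "similar_mat_wit (four_block_mat (mat 1 1 (\<lambda>_. e)) A2 (0\<^sub>m m 1) A3)
           (four_block_mat (mat 1 1 (\<lambda>_. e)) (A2 * P) (0\<^sub>m m 1) B) P1 (mat_adjoint P1)"
proof -
  from similar_mat_witD2[OF A3 simP]
  have P: "P \<in> carrier_mat m m" and PP: "P * mat_adjoint P = 1\<^sub>m m" by auto
  have "mat_adjoint P1 = four_block_mat (1\<^sub>m 1) (0\<^sub>m 1 m) (0\<^sub>m m 1) (mat_adjoint P)"
    unfolding P1_def using P by (intro eq_matI) auto
  moreover have "similar_mat_wit (four_block_mat (mat 1 1 (\<lambda>_. e)) A2 (0\<^sub>m m 1) A3)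
      (four_block_mat (mat 1 1 (\<lambda>_. e)) (A2 * P) (0\<^sub>m m 1) B) P1
      (four_block_mat (1\<^sub>m 1) (0\<^sub>m 1 m) (0\<^sub>m m 1) (mat_adjoint P))"
    unfolding P1_def
    by (rule similar_mat_wit_four_block[OF similar_mat_wit_refl simP])
      (use PP A2 A3 P in \<open>auto simp: assoc_mult_mat[OF A2 P, of _ m]\<close>)
  ultimately show ?thesis by simp
qed

lemma unitary_schur_decomposition:
  assumes "(A :: complex mat) \<in> carrier_mat n n"
    and "char_poly A = (\<Prod>e \<leftarrow> es. [:- e, 1:])"
  shows "\<exists>B P. similar_mat_wit A B P (mat_adjoint P) \<and> upper_triangular B \<and> diag_mat B = es"
  using assms
proof (induction es arbitrary: n A)
  case Nil
  with degree_monic_char_poly[of A n] have "n = 0" by auto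
  with Nil.prems(1) have "similar_mat_wit A A (1\<^sub>m n) (mat_adjoint (1\<^sub>m n))"
    "upper_triangular A" "diag_mat A = []"
    using similar_mat_wit_refl[of A n] by (auto simp: diag_mat_def upper_triangular_def)
  then show ?case by blast
next
  case (Cons e es n A)
  have A: "A \<in> carrier_mat n n" by fact
  have cp: "char_poly A = [:- e, 1:] * (\<Prod>e \<leftarrow> es. [:- e, 1:])"
    using Cons.prems(2) by simp
  have e: "eigenvalue A e" unfolding eigenvalue_root_char_poly[OF A] cp by simp
  then have n: "n \<noteq> 0" using A by (auto simp: eigenvalue_def eigenvector_def)
  from e obtain W where simW: "similar_mat_wit A (mat_adjoint W * A * W) W (mat_adjoint W)"
    and col0: "col (mat_adjoint W * A * W) 0 = vec n (\<lambda>i. if i = 0 then e else 0)"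
    using unitary_deflation[OF A] by blast
  define A' where "A' = mat_adjoint W * A * W"
  have W: "W \<in> carrier_mat n n" and A': "A' \<in> carrier_mat n n"
    using similar_mat_witD2[OF A simW] unfolding A'_def by auto
  obtain A2 A3 where A2: "A2 \<in> carrier_mat 1 (n - 1)" and A3: "A3 \<in> carrier_mat (n - 1) (n - 1)"
    and A'_blocks: "A' = four_block_mat (mat 1 1 (\<lambda>_. e)) A2 (0\<^sub>m (n - 1) 1) A3"
    using four_block_of_first_col[OF A' n col0[folded A'_def]] .
  have "char_poly A = char_poly A'"
    using simW unfolding A'_def by (intro char_poly_similar) (auto simp: similar_mat_def)
  also have "\<dots> = [:- e, 1:] * char_poly A3"
    unfolding A'_blocks by (rule char_poly_four_block_scalar[OF A2 A3])
  finally have "char_poly A3 = (\<Prod>e \<leftarrow> es. [:- e, 1:])"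
    unfolding cp by (metis mult_cancel_left pCons_eq_0_iff zero_neq_one)
  from Cons.IH[OF A3 this] obtain B P where simP: "similar_mat_wit A3 B P (mat_adjoint P)"
    and ut: "upper_triangular B" and diag: "diag_mat B = es" by blast
  from similar_mat_witD2[OF A3 simP] have B: "B \<in> carrier_mat (n - 1) (n - 1)"
    and P: "P \<in> carrier_mat (n - 1) (n - 1)" by auto
  define P1 where "P1 = four_block_mat (1\<^sub>m 1) (0\<^sub>m 1 (n - 1)) (0\<^sub>m (n - 1) 1) P"
  have P1: "P1 \<in> carrier_mat n n" unfolding P1_def using P n by auto
  define C where "C = four_block_mat (mat 1 1 (\<lambda>_. e)) (A2 * P) (0\<^sub>m (n - 1) 1) B"
  have "similar_mat_wit A' C P1 (mat_adjoint P1)"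
    unfolding A'_blocks C_def P1_def by (rule similar_mat_wit_four_block_unitary[OF simP A2 A3])
  from similar_mat_wit_trans[OF simW[folded A'_def] this]
  have "similar_mat_wit A C (W * P1) (mat_adjoint (W * P1))"
    using mat_adjoint_mult[OF W P1] by simp
  moreover have "upper_triangular C"
    unfolding C_def using B ut by (intro upper_triangular_four_block) auto
  moreover have "diag_mat C = e # es"
    unfolding C_def diag_four_block_mat[OF mat_carrier B] diag by (simp add: diag_mat_def)
  ultimately show ?case by blast
qed

lemma proots_prod_linear_factors: "proots (\<Prod>(e :: complex) \<leftarrow> es. [:- e, 1:]) = mset es"
proof (induction es)
  case (Cons a es)
  have "monic (\<Prod>(e :: complex) \<leftarrow> es. [:- e, 1:])" by (rule monic_prod_list) auto
  then have "(\<Prod>(e :: complex) \<leftarrow> es. [:- e, 1:]) \<noteq> 0" by auto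
  then have "proots ([:- a, 1:] * (\<Prod>e \<leftarrow> es. [:- e, 1:])) = {#a#} + mset es"
    using Cons.IH by (subst proots_mult) auto
  then show ?case by simp
qed simp

lemma proots_char_poly_similar_diag:
  assumes "similar_mat (M :: complex mat) (mat_diag n f)"
  shows "proots (char_poly M) = mset (map f [0..<n])"
proof -
  have "upper_triangular (mat_diag n f)" by (auto simp: upper_triangular_def mat_diag_def)
  moreover have "diag_mat (mat_diag n f) = map f [0..<n]"
    by (rule nth_equalityI) (auto simp: diag_mat_def mat_diag_def)
  ultimately have "char_poly M = (\<Prod>a \<leftarrow> map f [0..<n]. [:- a, 1:])"
    using char_poly_upper_triangular[of "mat_diag n f" n] char_poly_similar[OF assms] by simp
  then show ?thesis by (simp only: proots_prod_linear_factors)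
qed

lemma hermitian_upper_triangular_eq_diag:
  assumes B: "(B :: complex mat) \<in> carrier_mat n n" and ut: "upper_triangular B"
    and herm: "mat_adjoint B = B"
  shows "B = mat_diag n (\<lambda>i. complex_of_real (Re (B $$ (i, i))))"
proof (rule eq_matI)
  fix i j assume ij: "i < dim_row (mat_diag n (\<lambda>i. complex_of_real (Re (B $$ (i, i)))))"
    "j < dim_col (mat_diag n (\<lambda>i. complex_of_real (Re (B $$ (i, i)))))"
  then have "i < n" "j < n" by (auto simp: mat_diag_def)
  then have cnj: "B $$ (i, j) = cnj (B $$ (j, i))"
    using arg_cong[OF herm, of "\<lambda>X. X $$ (i, j)"] B by auto
  show "B $$ (i, j) = mat_diag n (\<lambda>i. complex_of_real (Re (B $$ (i, i)))) $$ (i, j)"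
  proof (cases "i = j")
    case True
    with cnj have "Im (B $$ (i, i)) = 0" by (metis cnj.sel(2) neg_equal_zero)
    with True \<open>i < n\<close> show ?thesis by (simp add: mat_diag_def complex_eq_iff)
  next
    case False
    with ut B \<open>i < n\<close> \<open>j < n\<close> have "B $$ (i, j) = 0 \<or> B $$ (j, i) = 0"
      by (metis carrier_matD(1) linorder_neqE_nat upper_triangularD)
    with cnj False \<open>i < n\<close> \<open>j < n\<close> show ?thesis by (auto simp: mat_diag_def)
  qed
qed (use B in \<open>auto simp: mat_diag_def\<close>)

lemma hermitian_unitary_diagonalization:
  assumes M: "M \<in> carrier_mat n n" and herm: "mat_adjoint M = M"
  obtains U d where "unitary_mat n U"
    "mat_adjoint U * M * U = mat_diag n (\<lambda>i. complex_of_real (d i))"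
proof -
  obtain es where "char_poly M = (\<Prod>a \<leftarrow> es. [:- a, 1:])"
    using char_poly_factorized[OF M] by auto
  then obtain B U where sim: "similar_mat_wit M B U (mat_adjoint U)" and ut: "upper_triangular B"
    using unitary_schur_decomposition[OF M] by blast
  have U: "unitary_mat n U" using unitary_mat_if_similar_mat_wit[OF M sim] .
  from similar_mat_witD2[OF M sim] have B: "B \<in> carrier_mat n n" by auto
  have UMU: "mat_adjoint U * M * U = B"
    using similar_mat_witD2(3)[OF B similar_mat_wit_sym[OF sim]] by simp
  have Uc: "U \<in> carrier_mat n n" and Ua: "mat_adjoint U \<in> carrier_mat n n"
    using U by (auto simp: unitary_mat_def)
  have "mat_adjoint B = mat_adjoint U * mat_adjoint (mat_adjoint U * M)"
    unfolding UMU[symmetric] by (rule mat_adjoint_mult[OF mult_carrier_mat[OF Ua M] Uc])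
  also have "mat_adjoint (mat_adjoint U * M) = M * U"
    using mat_adjoint_mult[OF Ua M] herm by simp
  also have "mat_adjoint U * (M * U) = B"
    using UMU assoc_mult_mat[OF Ua M Uc] by simp
  finally have "mat_adjoint B = B" .
  from hermitian_upper_triangular_eq_diag[OF B ut this] UMU U that show ?thesis by metis
qed

section \<open>The two largest singular values\<close>

lemma mat_adjoint_mult_col_unitary:
  assumes "unitary_mat n U" "k < n"
  shows "mat_adjoint U *\<^sub>v col U k = unit_vec n k"
  using assms col_mult2[of "mat_adjoint U" n n U n k] by (simp add: unitary_mat_def)

lemma sum_mult_unit_vec_sq:
  "k < n \<Longrightarrow> (\<Sum>i<n. f i * (cmod (unit_vec n k $ i))\<^sup>2) = (f k :: real)"
  by (simp add: unit_vec_def if_distrib[of "\<lambda>x. f _ * (cmod x)\<^sup>2"] cong: if_cong)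

lemma cscalar_prod_mat_diag:
  assumes "w \<in> carrier_vec n"
  shows "w \<bullet>c (mat_diag n (\<lambda>i. complex_of_real (d i)) *\<^sub>v w)
           = complex_of_real (\<Sum>k<n. d k * (cmod (w $ k))\<^sup>2)"
proof -
  have "mat_diag n (\<lambda>i. complex_of_real (d i)) *\<^sub>v w = vec n (\<lambda>k. complex_of_real (d k) * w $ k)"
    using assms by (intro eq_vecI) (auto simp: mat_diag_def scalar_prod_def if_distrib if_distribR cong: if_cong)
  then have "w \<bullet>c (mat_diag n (\<lambda>i. complex_of_real (d i)) *\<^sub>v w)
      = (\<Sum>k<n. w $ k * cnj (complex_of_real (d k) * w $ k))"
    using assms by (simp add: cscalar_prod_eq_sum[of _ n])
  also have "\<dots> = (\<Sum>k<n. complex_of_real (d k * (cmod (w $ k))\<^sup>2))"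
    unfolding of_real_mult complex_norm_square by (simp add: mult_ac)
  finally show ?thesis by simp
qed

lemma singular_values_eq_sqrt_eigenvalues:
  assumes "similar_mat (mat_adjoint X * X) (mat_diag n (\<lambda>i. complex_of_real (d i)))"
  shows "singular_values X = rev (sort (map (\<lambda>k. sqrt (d k)) [0..<n]))"
proof -
  have "image_mset (\<lambda>z. sqrt (Re z)) (proots (char_poly (mat_adjoint X * X)))
      = mset (map (\<lambda>k. sqrt (d k)) [0..<n])"
    unfolding proots_char_poly_similar_diag[OF assms] by (simp add: multiset.map_comp o_def)
  then show ?thesis unfolding singular_values_def by (simp only: sorted_list_of_multiset_mset)
qed

lemma sq_norm_vec_mult_mat_vec_diag:
  assumes X: "(X :: complex mat) \<in> carrier_mat n n" and U: "unitary_mat n U"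
    and XX: "mat_adjoint X * X = U * mat_diag n (\<lambda>i. complex_of_real (d i)) * mat_adjoint U"
    and x: "x \<in> carrier_vec n"
  shows "sq_norm_vec (X *\<^sub>v x) = (\<Sum>k<n. d k * (cmod ((mat_adjoint U *\<^sub>v x) $ k))\<^sup>2)"
proof -
  define D where "D = mat_diag n (\<lambda>i. complex_of_real (d i))"
  have Xa: "mat_adjoint X \<in> carrier_mat n n" and Uc: "U \<in> carrier_mat n n"
    and Ua: "mat_adjoint U \<in> carrier_mat n n" and D: "D \<in> carrier_mat n n"
    using X U by (auto simp: unitary_mat_def D_def)
  have Ux: "mat_adjoint U *\<^sub>v x \<in> carrier_vec n" using Ua x by simp
  have "(X *\<^sub>v x) \<bullet>c (X *\<^sub>v x) = x \<bullet>c ((mat_adjoint X * X) *\<^sub>v x)"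
    using cscalar_prod_mult_mat_vec[OF X x] X x assoc_mult_mat_vec[OF Xa X x] by simp
  also have "(mat_adjoint X * X) *\<^sub>v x = U *\<^sub>v (D *\<^sub>v (mat_adjoint U *\<^sub>v x))"
    unfolding XX D_def[symmetric]
    using assoc_mult_mat_vec[OF mult_carrier_mat[OF Uc D] Ua x] assoc_mult_mat_vec[OF Uc D Ux] by simp
  also have "x \<bullet>c (U *\<^sub>v (D *\<^sub>v (mat_adjoint U *\<^sub>v x)))
      = (mat_adjoint U *\<^sub>v x) \<bullet>c (D *\<^sub>v (mat_adjoint U *\<^sub>v x))"
    using cscalar_prod_mult_mat_vec[OF Ua x, of "D *\<^sub>v (mat_adjoint U *\<^sub>v x)"] D Ux by simp
  finally show ?thesis unfolding D_def cscalar_prod_mat_diag[OF Ux] sq_norm_vec_def by simp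
qed

lemma singular_values_unitary_diag:
  assumes X: "(X :: complex mat) \<in> carrier_mat n n"
  obtains U d where "unitary_mat n U" "\<And>k. k < n \<Longrightarrow> 0 \<le> d k"
    "singular_values X = rev (sort (map (\<lambda>k. sqrt (d k)) [0..<n]))"
    "\<And>x. x \<in> carrier_vec n \<Longrightarrow>
       sq_norm_vec (X *\<^sub>v x) = (\<Sum>k<n. d k * (cmod ((mat_adjoint U *\<^sub>v x) $ k))\<^sup>2)"
proof -
  define M where "M = mat_adjoint X * X"
  have Xa: "mat_adjoint X \<in> carrier_mat n n" using X by simp
  have M: "M \<in> carrier_mat n n" unfolding M_def using mult_carrier_mat[OF Xa X] .
  have "mat_adjoint M = M" unfolding M_def using mat_adjoint_mult[OF Xa X] by simp
  then obtain U d where U: "unitary_mat n U"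
    and UMU: "mat_adjoint U * M * U = mat_diag n (\<lambda>i. complex_of_real (d i))"
    using hermitian_unitary_diagonalization[OF M] by blast
  define D where "D = mat_diag n (\<lambda>i. complex_of_real (d i))"
  have "similar_mat_wit D M (mat_adjoint U) U"
    using U M UMU by (intro similar_mat_witI[of _ _ n]) (auto simp: unitary_mat_def D_def)
  then have sim: "similar_mat_wit M D U (mat_adjoint U)" by (rule similar_mat_wit_sym)
  have sv: "singular_values X = rev (sort (map (\<lambda>k. sqrt (d k)) [0..<n]))"
    using singular_values_eq_sqrt_eigenvalues[of X n d] sim unfolding similar_mat_def D_def M_def by blast
  have qf: "sq_norm_vec (X *\<^sub>v x) = (\<Sum>k<n. d k * (cmod ((mat_adjoint U *\<^sub>v x) $ k))\<^sup>2)"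
    if "x \<in> carrier_vec n" for x
    using sq_norm_vec_mult_mat_vec_diag[OF X U _ that] similar_mat_witD2(3)[OF M sim]
    unfolding M_def D_def by blast
  have "0 \<le> d k" if k: "k < n" for k
    using qf[of "col U k"] U k mat_adjoint_mult_col_unitary[OF U k] sum_mult_unit_vec_sq[OF k, of d]
      sq_norm_vec_nonneg[of "X *\<^sub>v col U k"] by (simp add: unitary_mat_def)
  with U sv qf that show ?thesis by blast
qed

definition orthonormal_pair :: "nat \<Rightarrow> complex vec \<Rightarrow> complex vec \<Rightarrow> bool" where
  "orthonormal_pair n u v \<longleftrightarrow>
     u \<in> carrier_vec n \<and> v \<in> carrier_vec n \<and> u \<bullet>c u = 1 \<and> v \<bullet>c v = 1 \<and> u \<bullet>c v = 0"

lemma orthonormal_pair_cols: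
  assumes U: "unitary_mat n U" and ij: "i < n" "j < n" "i \<noteq> j"
  shows "orthonormal_pair n (col U i) (col U j)"
proof -
  have Uc: "U \<in> carrier_mat n n" using U by (simp add: unitary_mat_def)
  have "col U a \<bullet>c col U b = (mat_adjoint U * U) $$ (b, a)" if "a < n" "b < n" for a b
    using Uc that by (auto simp: scalar_prod_def mult.commute intro!: sum.cong)
  then show ?thesis
    using U ij by (auto simp: orthonormal_pair_def unitary_mat_def)
qed

lemma orthonormal_pair_mult_adjoint_unitary:
  assumes U: "unitary_mat n U" and uv: "orthonormal_pair n u v"
  shows "orthonormal_pair n (mat_adjoint U *\<^sub>v u) (mat_adjoint U *\<^sub>v v)"
proof -
  have Ua: "mat_adjoint U \<in> carrier_mat n n" and Uc: "U \<in> carrier_mat n n"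
    using U by (auto simp: unitary_mat_def)
  have "(mat_adjoint U *\<^sub>v x) \<bullet>c (mat_adjoint U *\<^sub>v y) = x \<bullet>c y"
    if "x \<in> carrier_vec n" "y \<in> carrier_vec n" for x y
    using cscalar_prod_mult_mat_vec[OF Ua that(1), of "mat_adjoint U *\<^sub>v y"] that Ua U
      assoc_mult_mat_vec[OF Uc Ua that(2)]
    by (simp add: unitary_mat_def)
  with uv Ua show ?thesis by (simp add: orthonormal_pair_def)
qed

lemma orthonormal_pair_coords_sq_sum:
  assumes "orthonormal_pair n w y"
  shows "(\<Sum>k<n. (cmod (w $ k))\<^sup>2 + (cmod (y $ k))\<^sup>2) = 2"
  using assms sq_norm_vec_eq_sum[of w n] sq_norm_vec_eq_sum[of y n]
  by (simp add: orthonormal_pair_def sq_norm_vec_def sum.distrib)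

text \<open>Bessel's inequality for the coordinate vector: with \<open>c = |w\<^sub>k|\<^sup>2 + |y\<^sub>k|\<^sup>2\<close>, the
  vector \<open>z = cnj w\<^sub>k w + cnj y\<^sub>k y\<close> has \<open>\<parallel>z\<parallel>\<^sup>2 = c = z\<^sub>k\<close>, hence \<open>c\<^sup>2 \<le> c\<close>.\<close>

lemma orthonormal_pair_coords_sq_le:
  assumes wy: "orthonormal_pair n w y" and k: "k < n"
  shows "(cmod (w $ k))\<^sup>2 + (cmod (y $ k))\<^sup>2 \<le> 1"
proof -
  define a where "a = cnj (w $ k)"
  define b where "b = cnj (y $ k)"
  define z where "z = (\<lambda>i. a * w $ i + b * y $ i)"
  define c where "c = (cmod (w $ k))\<^sup>2 + (cmod (y $ k))\<^sup>2"
  have w: "w \<in> carrier_vec n" and y: "y \<in> carrier_vec n" using wy by (auto simp: orthonormal_pair_def)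
  have ww: "(\<Sum>i<n. w $ i * cnj (w $ i)) = 1" and yy: "(\<Sum>i<n. y $ i * cnj (y $ i)) = 1"
    and wy0: "(\<Sum>i<n. w $ i * cnj (y $ i)) = 0"
    using wy cscalar_prod_eq_sum[OF w w] cscalar_prod_eq_sum[OF y y] cscalar_prod_eq_sum[OF w y]
    by (auto simp: orthonormal_pair_def)
  have "(\<Sum>i<n. y $ i * cnj (w $ i)) = cnj (\<Sum>i<n. w $ i * cnj (y $ i))"
    by (simp add: mult.commute)
  with wy0 have yw0: "(\<Sum>i<n. y $ i * cnj (w $ i)) = 0" by simp
  have "z i * cnj (z i) = a * cnj a * (w $ i * cnj (w $ i)) + a * cnj b * (w $ i * cnj (y $ i))
      + b * cnj a * (y $ i * cnj (w $ i)) + b * cnj b * (y $ i * cnj (y $ i))" for i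
    unfolding z_def by (simp add: ring_distribs mult_ac)
  then have "(\<Sum>i<n. z i * cnj (z i)) = a * cnj a + b * cnj b"
    using ww yy wy0 yw0 by (simp add: sum.distrib flip: sum_distrib_left)
  also have "\<dots> = complex_of_real c"
    unfolding c_def a_def b_def of_real_add complex_norm_square by (simp add: mult.commute)
  finally have "complex_of_real (\<Sum>i<n. (cmod (z i))\<^sup>2) = complex_of_real c"
    by (simp only: of_real_sum complex_norm_square)
  then have "(\<Sum>i<n. (cmod (z i))\<^sup>2) = c" by (simp only: of_real_eq_iff)
  moreover have "z k = complex_of_real c"
    unfolding z_def a_def b_def c_def of_real_add complex_norm_square by (simp add: mult.commute)
  moreover have "(cmod (z k))\<^sup>2 \<le> (\<Sum>i<n. (cmod (z i))\<^sup>2)"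
    using k by (intro member_le_sum) auto
  moreover have "0 \<le> c" unfolding c_def by simp
  ultimately have "c\<^sup>2 \<le> c" by simp
  have "c \<le> 1"
  proof (rule ccontr)
    assume "\<not> c \<le> 1"
    then have "c * 1 < c * c" by (intro mult_strict_left_mono) auto
    with \<open>c\<^sup>2 \<le> c\<close> show False by (simp add: power2_eq_square)
  qed
  then show ?thesis by (simp add: c_def)
qed

lemma sort_map_eq_map_sort_key: "sort (map f xs) = map f (sort_key f xs)"
  by (rule properties_for_sort) simp_all

lemma sorted_desc_top_two:
  fixes f :: "nat \<Rightarrow> real"
  assumes n: "2 \<le> n"
  obtains i j where "i < n" "j < n" "i \<noteq> j"
    "rev (sort (map f [0..<n])) ! 0 = f i" "rev (sort (map f [0..<n])) ! 1 = f j"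
    "\<And>k. k < n \<Longrightarrow> f k \<le> f i" "\<And>k. k < n \<Longrightarrow> k \<noteq> i \<Longrightarrow> f k \<le> f j"
proof -
  define q where "q = sort_key f [0..<n]"
  have q: "distinct q" "set q = {..<n}" "length q = n" "sorted (map f q)"
    unfolding q_def by auto
  have mono: "f (q ! a) \<le> f (q ! b)" if "a \<le> b" "b < n" for a b
    using sorted_nth_mono[OF q(4), of a b] that q(3) by simp
  have L: "rev (sort (map f [0..<n])) = rev (map f q)"
    unfolding q_def sort_map_eq_map_sort_key ..
  show ?thesis
  proof (rule that[of "q ! (n - 1)" "q ! (n - 2)"])
    show "q ! (n - 1) < n" "q ! (n - 2) < n"
      using q(2,3) n nth_mem[of _ q] by auto
    show "q ! (n - 1) \<noteq> q ! (n - 2)"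
      using nth_eq_iff_index_eq[OF q(1), of "n - 1" "n - 2"] q(3) n by simp
    show "rev (sort (map f [0..<n])) ! 0 = f (q ! (n - 1))"
      "rev (sort (map f [0..<n])) ! 1 = f (q ! (n - 2))"
      unfolding L using q(3) n by (simp_all add: rev_nth numeral_2_eq_2)
  next
    fix k assume k: "k < n"
    then obtain m where m: "m < n" "k = q ! m"
      using q(2,3) in_set_conv_nth[of k q] by auto
    show "f k \<le> f (q ! (n - 1))" using mono[of m "n - 1"] m by simp
    assume "k \<noteq> q ! (n - 1)"
    then have "m \<le> n - 2" using m by (cases "m = n - 1") auto
    then show "f k \<le> f (q ! (n - 2))" using mono[of m "n - 2"] m n by simp
  qed
qed

lemma weighted_sum_le_top_two:
  fixes c d :: "nat \<Rightarrow> real"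
  assumes i: "i < n" and c: "\<And>k. k < n \<Longrightarrow> 0 \<le> c k \<and> c k \<le> 1" and csum: "(\<Sum>k<n. c k) = 2"
    and dij: "d j \<le> d i" and dk: "\<And>k. k < n \<Longrightarrow> k \<noteq> i \<Longrightarrow> d k \<le> d j"
  shows "(\<Sum>k<n. c k * d k) \<le> d i + d j"
proof -
  have "(\<Sum>k<n. c k * d k) = (\<Sum>k<n. c k * (d k - d j)) + 2 * d j"
    using csum by (simp add: algebra_simps sum_subtractf flip: sum_distrib_right)
  also have "(\<Sum>k<n. c k * (d k - d j))
      = c i * (d i - d j) + (\<Sum>k\<in>{..<n} - {i}. c k * (d k - d j))"
    using i by (simp add: sum.remove)
  finally have split: "(\<Sum>k<n. c k * d k)
      = c i * (d i - d j) + (\<Sum>k\<in>{..<n} - {i}. c k * (d k - d j)) + 2 * d j" .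
  have "(\<Sum>k\<in>{..<n} - {i}. c k * (d k - d j)) \<le> 0"
    using c dk by (intro sum_nonpos) (auto intro: mult_nonneg_nonpos)
  moreover have "c i * (d i - d j) \<le> d i - d j"
    using c[OF i] dij by (simp add: mult_left_le_one_le)
  ultimately show ?thesis using split by linarith
qed

lemma sigma_top_two_spectral:
  assumes X: "(X :: complex mat) \<in> carrier_mat n n" and n: "2 \<le> n"
  obtains U i j d where "unitary_mat n U" "i < n" "j < n" "i \<noteq> j"
    "(sigma X 1)\<^sup>2 = d i" "(sigma X 2)\<^sup>2 = d j"
    "\<And>k. k < n \<Longrightarrow> d k \<le> d i" "\<And>k. k < n \<Longrightarrow> k \<noteq> i \<Longrightarrow> d k \<le> d j"
    "\<And>x. x \<in> carrier_vec n \<Longrightarrow>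
       sq_norm_vec (X *\<^sub>v x) = (\<Sum>k<n. d k * (cmod ((mat_adjoint U *\<^sub>v x) $ k))\<^sup>2)"
proof -
  obtain U d where U: "unitary_mat n U" and d: "\<And>k. k < n \<Longrightarrow> 0 \<le> d k"
    and sv: "singular_values X = rev (sort (map (\<lambda>k. sqrt (d k)) [0..<n]))"
    and qf: "\<And>x. x \<in> carrier_vec n \<Longrightarrow>
       sq_norm_vec (X *\<^sub>v x) = (\<Sum>k<n. d k * (cmod ((mat_adjoint U *\<^sub>v x) $ k))\<^sup>2)"
    using singular_values_unitary_diag[OF X] by blast
  obtain i j where ij: "i < n" "j < n" "i \<noteq> j"
    and top: "rev (sort (map (\<lambda>k. sqrt (d k)) [0..<n])) ! 0 = sqrt (d i)"
      "rev (sort (map (\<lambda>k. sqrt (d k)) [0..<n])) ! 1 = sqrt (d j)"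
    and le: "\<And>k. k < n \<Longrightarrow> sqrt (d k) \<le> sqrt (d i)" "\<And>k. k < n \<Longrightarrow> k \<noteq> i \<Longrightarrow> sqrt (d k) \<le> sqrt (d j)"
    using sorted_desc_top_two[OF n, of "\<lambda>k. sqrt (d k)"] by blast
  show ?thesis
  proof (rule that[OF U ij _ _ _ _ qf])
    show "(sigma X 1)\<^sup>2 = d i" "(sigma X 2)\<^sup>2 = d j"
      using top d ij unfolding sigma_def sv by simp_all
  qed (use le in auto)
qed

lemma sigma_sq_sum_attained:
  assumes X: "(X :: complex mat) \<in> carrier_mat n n" and n: "2 \<le> n"
  obtains u v where "orthonormal_pair n u v"
    "(sigma X 1)\<^sup>2 + (sigma X 2)\<^sup>2 = sq_norm_vec (X *\<^sub>v u) + sq_norm_vec (X *\<^sub>v v)"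
proof -
  obtain U i j d where U: "unitary_mat n U" and ij: "i < n" "j < n" "i \<noteq> j"
    and s12: "(sigma X 1)\<^sup>2 = d i" "(sigma X 2)\<^sup>2 = d j"
    and qf: "\<And>x. x \<in> carrier_vec n \<Longrightarrow>
       sq_norm_vec (X *\<^sub>v x) = (\<Sum>k<n. d k * (cmod ((mat_adjoint U *\<^sub>v x) $ k))\<^sup>2)"
    by (rule sigma_top_two_spectral[OF X n]) blast
  have col: "sq_norm_vec (X *\<^sub>v col U k) = d k" if k: "k < n" for k
  proof -
    have "col U k \<in> carrier_vec n" using U k by (simp add: unitary_mat_def)
    then show ?thesis
      using qf mat_adjoint_mult_col_unitary[OF U k] sum_mult_unit_vec_sq[OF k, of d] by simp
  qed
  show ?thesis
    by (rule that[OF orthonormal_pair_cols[OF U ij]]) (simp only: s12 col ij(1,2))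
qed

text \<open>The converse inequality is Ky Fan's maximum principle for the two largest eigenvalues of
  \<open>X\<^sup>* X\<close>: in an eigenbasis the left-hand side is a combination of the eigenvalues with
  weights in \<open>[0, 1]\<close> summing to \<open>2\<close>.\<close>

lemma sq_norm_vec_pair_le_sigma_sq_sum:
  assumes X: "(X :: complex mat) \<in> carrier_mat n n" and n: "2 \<le> n"
    and uv: "orthonormal_pair n u v"
  shows "sq_norm_vec (X *\<^sub>v u) + sq_norm_vec (X *\<^sub>v v) \<le> (sigma X 1)\<^sup>2 + (sigma X 2)\<^sup>2"
proof -
  obtain U i j d where U: "unitary_mat n U" and ij: "i < n" "j < n" "i \<noteq> j"
    and s12: "(sigma X 1)\<^sup>2 = d i" "(sigma X 2)\<^sup>2 = d j"
    and le: "\<And>k. k < n \<Longrightarrow> d k \<le> d i" "\<And>k. k < n \<Longrightarrow> k \<noteq> i \<Longrightarrow> d k \<le> d j"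
    and qf: "\<And>x. x \<in> carrier_vec n \<Longrightarrow>
       sq_norm_vec (X *\<^sub>v x) = (\<Sum>k<n. d k * (cmod ((mat_adjoint U *\<^sub>v x) $ k))\<^sup>2)"
    by (rule sigma_top_two_spectral[OF X n]) blast
  define w where "w = mat_adjoint U *\<^sub>v u"
  define y where "y = mat_adjoint U *\<^sub>v v"
  have wy: "orthonormal_pair n w y"
    unfolding w_def y_def by (rule orthonormal_pair_mult_adjoint_unitary[OF U uv])
  have "sq_norm_vec (X *\<^sub>v u) = (\<Sum>k<n. d k * (cmod (w $ k))\<^sup>2)"
    "sq_norm_vec (X *\<^sub>v v) = (\<Sum>k<n. d k * (cmod (y $ k))\<^sup>2)"
    unfolding w_def y_def using uv by (intro qf; simp add: orthonormal_pair_def)+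
  then have "sq_norm_vec (X *\<^sub>v u) + sq_norm_vec (X *\<^sub>v v)
      = (\<Sum>k<n. ((cmod (w $ k))\<^sup>2 + (cmod (y $ k))\<^sup>2) * d k)"
    by (simp only: sum.distrib[symmetric]) (rule sum.cong[OF refl], simp add: algebra_simps)
  also have "\<dots> \<le> d i + d j"
  proof (rule weighted_sum_le_top_two[OF ij(1) _ orthonormal_pair_coords_sq_sum[OF wy] le(1)[OF ij(2)] le(2)])
    show "0 \<le> (cmod (w $ k))\<^sup>2 + (cmod (y $ k))\<^sup>2 \<and> (cmod (w $ k))\<^sup>2 + (cmod (y $ k))\<^sup>2 \<le> 1"
      if "k < n" for k
      using orthonormal_pair_coords_sq_le[OF wy that] by simp
  qed
  finally show ?thesis unfolding s12 .
qed

lemma isCont_sq_norm_mult_mat_vec: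
  assumes M: "\<And>e. M e \<in> carrier_mat n m"
    and cont: "\<And>i j. i < n \<Longrightarrow> j < m \<Longrightarrow> isCont (\<lambda>e. M e $$ (i, j)) x"
    and u: "u \<in> carrier_vec m"
  shows "isCont (\<lambda>e. sq_norm_vec (M e *\<^sub>v u)) x"
proof -
  have "sq_norm_vec (M e *\<^sub>v u) = (\<Sum>i<n. (cmod (\<Sum>j<m. M e $$ (i, j) * u $ j))\<^sup>2)" for e
    using M[of e] u by (simp add: sq_norm_vec_eq_sum[of _ n] scalar_prod_def lessThan_atLeast0)
  moreover have "isCont (\<lambda>e. \<Sum>i<n. (cmod (\<Sum>j<m. M e $$ (i, j) * u $ j))\<^sup>2) x"
    using cont by (intro continuous_intros) auto
  ultimately show ?thesis by simp
qed

lemma sigma_sq_sum_lower_semicontinuous: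
  assumes M: "\<And>e. M e \<in> carrier_mat n n" and n: "2 \<le> n"
    and cont: "\<And>i j. i < n \<Longrightarrow> j < n \<Longrightarrow> isCont (\<lambda>e. M e $$ (i, j)) x"
    and r: "r < (sigma (M x) 1)\<^sup>2 + (sigma (M x) 2)\<^sup>2"
  shows "eventually (\<lambda>e. r < (sigma (M e) 1)\<^sup>2 + (sigma (M e) 2)\<^sup>2) (at x)"
proof -
  obtain u v where uv: "orthonormal_pair n u v"
    and max: "(sigma (M x) 1)\<^sup>2 + (sigma (M x) 2)\<^sup>2 = sq_norm_vec (M x *\<^sub>v u) + sq_norm_vec (M x *\<^sub>v v)"
    using sigma_sq_sum_attained[OF M n] by blast
  define G where "G e = sq_norm_vec (M e *\<^sub>v u) + sq_norm_vec (M e *\<^sub>v v)" for e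
  have "isCont G x"
    unfolding G_def using uv
    by (intro continuous_intros isCont_sq_norm_mult_mat_vec[OF M cont]) (auto simp: orthonormal_pair_def)
  then have "eventually (\<lambda>e. r < G e) (at x)"
    using r max unfolding G_def[symmetric] by (simp add: isCont_def order_tendstoD(1))
  then show ?thesis
  proof (rule eventually_mono)
    fix e assume "r < G e"
    also have "G e \<le> (sigma (M e) 1)\<^sup>2 + (sigma (M e) 2)\<^sup>2"
      unfolding G_def by (rule sq_norm_vec_pair_le_sigma_sq_sum[OF M n uv])
    finally show "r < (sigma (M e) 1)\<^sup>2 + (sigma (M e) 2)\<^sup>2" .
  qed
qed

lemma phi_lower_semicontinuous:
  assumes F: "\<And>e. F e \<in> carrier_mat 4 4" and H: "\<And>e. H e \<in> carrier_mat 4 4"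
    and contF: "\<And>i j. i < 4 \<Longrightarrow> j < 4 \<Longrightarrow> isCont (\<lambda>e. F e $$ (i, j)) x"
    and contH: "\<And>i j. i < 4 \<Longrightarrow> j < 4 \<Longrightarrow> isCont (\<lambda>e. H e $$ (i, j)) x"
    and r: "r < phi (F x) (H x)"
  shows "eventually (\<lambda>e. r < phi (F e) (H e)) (at x)"
proof -
  define K where "K e = kron (F e) (1\<^sub>m 4) + kron (1\<^sub>m 4) (H e)" for e
  have K: "K e \<in> carrier_mat 16 16" for e
    unfolding K_def kron_def using F[of e] H[of e] by auto
  have contK: "isCont (\<lambda>e. K e $$ (p, q)) x" if "p < 16" "q < 16" for p q
  proof -
    have "p div 4 < 4" "q div 4 < 4" "p mod 4 < 4" "q mod 4 < 4" using that by auto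
    then have "K e $$ (p, q) = F e $$ (p div 4, q div 4) * 1\<^sub>m 4 $$ (p mod 4, q mod 4)
        + 1\<^sub>m 4 $$ (p div 4, q div 4) * H e $$ (p mod 4, q mod 4)" for e
      unfolding K_def kron_def using F[of e] H[of e] that by simp
    with \<open>p div 4 < 4\<close> \<open>q div 4 < 4\<close> \<open>p mod 4 < 4\<close> \<open>q mod 4 < 4\<close> show ?thesis
      by (simp only:) (intro continuous_intros contF contH)
  qed
  have phi_K: "phi (F e) (H e) = (sigma (K e) 1)\<^sup>2 + (sigma (K e) 2)\<^sup>2" for e
    unfolding phi_def K_def Let_def ..
  have "eventually (\<lambda>e. r < (sigma (K e) 1)\<^sup>2 + (sigma (K e) 2)\<^sup>2) (at x)"
    by (rule sigma_sq_sum_lower_semicontinuous[OF K _ contK]) (use r in \<open>simp_all add: phi_K\<close>)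
  then show ?thesis by (simp add: phi_K)
qed

section \<open>Perturbing a matrix to distinct eigenvalues\<close>

lemma mat_tr_mult_comm:
  assumes "(X :: complex mat) \<in> carrier_mat n m" "Y \<in> carrier_mat m n"
  shows "mat_tr (X * Y) = mat_tr (Y * X)"
proof -
  have "mat_tr (X * Y) = (\<Sum>i<n. \<Sum>k<m. X $$ (i, k) * Y $$ (k, i))"
    using assms by (simp add: mat_tr_def scalar_prod_def lessThan_atLeast0)
  also have "\<dots> = (\<Sum>k<m. \<Sum>i<n. Y $$ (k, i) * X $$ (i, k))"
    by (subst sum.swap) (simp add: mult.commute)
  also have "\<dots> = mat_tr (Y * X)"
    using assms by (simp add: mat_tr_def scalar_prod_def lessThan_atLeast0)
  finally show ?thesis .
qed

lemma mat_tr_add: "A \<in> carrier_mat n n \<Longrightarrow> B \<in> carrier_mat n n \<Longrightarrow> mat_tr (A + B) = mat_tr A + mat_tr B"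
  by (simp add: mat_tr_def sum.distrib)

lemma mat_tr_smult: "A \<in> carrier_mat n n \<Longrightarrow> mat_tr (c \<cdot>\<^sub>m A) = c * mat_tr A"
  unfolding mat_tr_def by (auto simp: sum_distrib_left intro!: sum.cong)

lemma mult_mat_vec_smult_mat: "M \<in> carrier_mat n m \<Longrightarrow> v \<in> carrier_vec m \<Longrightarrow> (c \<cdot>\<^sub>m M) *\<^sub>v v = c \<cdot>\<^sub>v (M *\<^sub>v v)"
  by (intro eq_vecI) (auto simp: scalar_prod_def sum_distrib_left mult.assoc)

lemma eigenvalue_smult_mat_iff:
  assumes M: "(M :: complex mat) \<in> carrier_mat n n" and c: "c \<noteq> 0"
  shows "eigenvalue (c \<cdot>\<^sub>m M) (c * z) \<longleftrightarrow> eigenvalue M z"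
proof -
  have cancel: "c \<cdot>\<^sub>v x = c \<cdot>\<^sub>v y \<longleftrightarrow> x = y" for x y :: "complex vec"
    using c by (auto simp: vec_eq_iff)
  have "(c \<cdot>\<^sub>m M) *\<^sub>v v = (c * z) \<cdot>\<^sub>v v \<longleftrightarrow> M *\<^sub>v v = z \<cdot>\<^sub>v v" if v: "v \<in> carrier_vec n" for v
    unfolding mult_mat_vec_smult_mat[OF M v] smult_smult_assoc[symmetric] cancel ..
  then show ?thesis using M unfolding eigenvalue_def eigenvector_def by auto
qed

lemma card_eigenvalues_smult:
  assumes M: "(M :: complex mat) \<in> carrier_mat n n" and c: "c \<noteq> 0"
  shows "card {z. eigenvalue (c \<cdot>\<^sub>m M) z} = card {z. eigenvalue M z}"
proof -
  note iff = eigenvalue_smult_mat_iff[OF M c]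
  have "{z. eigenvalue (c \<cdot>\<^sub>m M) z} = (\<lambda>z. c * z) ` {z. eigenvalue M z}"
  proof (intro equalityI subsetI)
    fix w assume "w \<in> {z. eigenvalue (c \<cdot>\<^sub>m M) z}"
    then have "eigenvalue M (w / c)" using iff[of "w / c"] c by simp
    then show "w \<in> (\<lambda>z. c * z) ` {z. eigenvalue M z}"
      using c by (intro image_eqI[of _ _ "w / c"]) auto
  qed (use iff in auto)
  moreover have "inj_on (\<lambda>z. c * z) {z. eigenvalue M z}" using c by (auto simp: inj_on_def)
  ultimately show ?thesis by (simp add: card_image)
qed

lemma eigenvalues_similar_upper_triangular:
  assumes A: "(A :: complex mat) \<in> carrier_mat n n" and S: "S \<in> carrier_mat n n"
    and ut: "upper_triangular S" and sim: "similar_mat A S"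
  shows "{z. eigenvalue A z} = set (diag_mat S)"
proof -
  have "eigenvalue A z \<longleftrightarrow> poly (\<Prod>a \<leftarrow> diag_mat S. [:- a, 1:]) z = 0" for z
    unfolding eigenvalue_root_char_poly[OF A] char_poly_similar[OF sim]
      char_poly_upper_triangular[OF S ut] ..
  then show ?thesis by (auto simp: poly_prod_list o_def)
qed

lemma similar_mat_wit_add_smult:
  assumes "similar_mat_wit (A :: complex mat) T P Q" and A: "A \<in> carrier_mat n n" and D: "D \<in> carrier_mat n n"
  shows "similar_mat_wit (A + c \<cdot>\<^sub>m (P * D * Q)) (T + c \<cdot>\<^sub>m D) P Q"
proof -
  from similar_mat_witD2[OF A assms(1)]
  have T: "T \<in> carrier_mat n n" and P: "P \<in> carrier_mat n n" and Q: "Q \<in> carrier_mat n n"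
    and PQ: "P * Q = 1\<^sub>m n" "Q * P = 1\<^sub>m n" and APTQ: "A = P * T * Q" by auto
  have "P * (T + c \<cdot>\<^sub>m D) = P * T + c \<cdot>\<^sub>m (P * D)"
    using mult_add_distrib_mat[OF P T, of "c \<cdot>\<^sub>m D"] mult_smult_distrib[OF P D] D by simp
  moreover have "(P * T + c \<cdot>\<^sub>m (P * D)) * Q = P * T * Q + c \<cdot>\<^sub>m (P * D * Q)"
    using add_mult_distrib_mat[of "P * T" n n "c \<cdot>\<^sub>m (P * D)" Q n]
      mult_smult_assoc_mat[of "P * D" n n Q n] P T D Q by simp
  ultimately have "P * (T + c \<cdot>\<^sub>m D) * Q = A + c \<cdot>\<^sub>m (P * D * Q)"
    unfolding APTQ by simp
  with T P Q D A PQ show ?thesis by (intro similar_mat_witI[of _ _ n]) auto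
qed

lemma eventually_distinct_diag_add:
  fixes a :: "nat \<Rightarrow> complex" and \<delta> :: "nat \<Rightarrow> real"
  assumes \<delta>: "inj_on \<delta> {..<n}"
  shows "eventually (\<lambda>e. distinct (map (\<lambda>i. a i + complex_of_real (e * \<delta> i)) [0..<n])) (at 0)"
proof -
  define bad where "bad i j = Re (a j - a i) / (\<delta> i - \<delta> j)" for i j
  have "eventually (\<lambda>e. \<forall>i\<in>{..<n}. \<forall>j\<in>{..<n}. e \<noteq> bad i j) (at 0)"
    by (intro eventually_ball_finite ballI) (auto intro: eventually_neq_at_within)
  then show ?thesis
  proof (rule eventually_mono)
    fix e :: real assume e: "\<forall>i\<in>{..<n}. \<forall>j\<in>{..<n}. e \<noteq> bad i j"
    have "a i + complex_of_real (e * \<delta> i) \<noteq> a j + complex_of_real (e * \<delta> j)"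
      if "i < n" "j < n" "i \<noteq> j" for i j
    proof
      assume "a i + complex_of_real (e * \<delta> i) = a j + complex_of_real (e * \<delta> j)"
      then have "Re (a i + complex_of_real (e * \<delta> i)) = Re (a j + complex_of_real (e * \<delta> j))"
        by (rule arg_cong)
      then have "e * (\<delta> i - \<delta> j) = Re (a j - a i)" by (simp add: algebra_simps)
      moreover have "\<delta> i \<noteq> \<delta> j" using \<delta> that by (auto dest: inj_onD)
      ultimately have "e = bad i j" unfolding bad_def by (simp add: field_simps)
      with e that show False by auto
    qed
    then show "distinct (map (\<lambda>i. a i + complex_of_real (e * \<delta> i)) [0..<n])"
      by (auto simp: distinct_conv_nth)
  qed
qed

lemma eventually_card_eigenvalues_perturbation:
  assumes A: "(A :: complex mat) \<in> carrier_mat n n"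
  obtains D where "D \<in> carrier_mat n n" "mat_tr D = 0"
    "eventually (\<lambda>e. card {z. eigenvalue (A + complex_of_real e \<cdot>\<^sub>m D) z} = n) (at 0)"
proof -
  obtain es where "char_poly A = (\<Prod>a \<leftarrow> es. [:- a, 1:])"
    using char_poly_factorized[OF A] by auto
  then obtain T where T: "T \<in> carrier_mat n n" and ut: "upper_triangular T" and "similar_mat A T"
    using schur_decomposition_exists[OF A] by blast
  then obtain P Q where sim: "similar_mat_wit A T P Q" unfolding similar_mat_def by blast
  from similar_mat_witD2[OF A sim] have P: "P \<in> carrier_mat n n" and Q: "Q \<in> carrier_mat n n"
    and QP: "Q * P = 1\<^sub>m n" by auto
  define \<delta> where "\<delta> i = real i - (\<Sum>k<n. real k) / real n" for i
  define \<Delta> where "\<Delta> = mat_diag n (\<lambda>i. complex_of_real (\<delta> i))"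
  have \<Delta>: "\<Delta> \<in> carrier_mat n n" unfolding \<Delta>_def by simp
  define D where "D = P * \<Delta> * Q"
  have D: "D \<in> carrier_mat n n" unfolding D_def using P \<Delta> Q by simp
  have "mat_tr D = mat_tr \<Delta>"
    unfolding D_def mat_tr_mult_comm[OF mult_carrier_mat[OF P \<Delta>] Q]
    using assoc_mult_mat[OF Q P \<Delta>] QP \<Delta> by simp
  also have "\<dots> = complex_of_real (\<Sum>i<n. \<delta> i)"
    unfolding mat_tr_def \<Delta>_def by (simp add: mat_diag_def)
  also have "(\<Sum>i<n. \<delta> i) = 0"
    unfolding \<delta>_def sum_subtractf by (cases "n = 0") simp_all
  finally have trD: "mat_tr D = 0" by simp
  have "inj_on \<delta> {..<n}" unfolding \<delta>_def by (auto simp: inj_on_def)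
  from eventually_distinct_diag_add[OF this, of "\<lambda>i. T $$ (i, i)"]
  have "eventually (\<lambda>e. card {z. eigenvalue (A + complex_of_real e \<cdot>\<^sub>m D) z} = n) (at 0)"
  proof (rule eventually_mono)
    fix e :: real
    assume dist: "distinct (map (\<lambda>i. T $$ (i, i) + complex_of_real (e * \<delta> i)) [0..<n])"
    define S where "S = T + complex_of_real e \<cdot>\<^sub>m \<Delta>"
    have S: "S \<in> carrier_mat n n" unfolding S_def using T \<Delta> by simp
    have "similar_mat (A + complex_of_real e \<cdot>\<^sub>m D) S"
      unfolding similar_mat_def S_def D_def using similar_mat_wit_add_smult[OF sim A \<Delta>] by blast
    moreover have "upper_triangular S"
      using ut T unfolding S_def \<Delta>_def by (auto simp: upper_triangular_def mat_diag_def)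
    ultimately have eig: "{z. eigenvalue (A + complex_of_real e \<cdot>\<^sub>m D) z} = set (diag_mat S)"
      using eigenvalues_similar_upper_triangular[OF _ S] A D by simp
    have diag: "diag_mat S = map (\<lambda>i. T $$ (i, i) + complex_of_real (e * \<delta> i)) [0..<n]"
      using T by (intro nth_equalityI) (auto simp: diag_mat_def S_def \<Delta>_def mat_diag_def)
    show "card {z. eigenvalue (A + complex_of_real e \<cdot>\<^sub>m D) z} = n"
      using distinct_card[OF dist] unfolding eig diag by simp
  qed
  with D trD that show ?thesis by blast
qed

section \<open>Approximating points of \<open>\<X>\<close> from \<open>\<Y>\<close>\<close>

lemma frob_norm_sq_eq_sum:
  assumes "M \<in> carrier_mat n m"
  shows "(frob_norm M)\<^sup>2 = (\<Sum>j<m. \<Sum>i<n. (cmod (M $$ (i, j)))\<^sup>2)"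
proof -
  have "mat_tr (mat_adjoint M * M) = (\<Sum>j<m. \<Sum>i<n. complex_of_real ((cmod (M $$ (i, j)))\<^sup>2))"
    using assms unfolding mat_tr_def complex_norm_square
    by (auto simp: scalar_prod_def lessThan_atLeast0 mult.commute intro!: sum.cong)
  moreover have "0 \<le> (\<Sum>j<m. \<Sum>i<n. (cmod (M $$ (i, j)))\<^sup>2)" by (intro sum_nonneg) auto
  ultimately show ?thesis unfolding frob_norm_def by (simp flip: of_real_sum)
qed

lemma frob_norm_smult:
  assumes "M \<in> carrier_mat n m"
  shows "(frob_norm (c \<cdot>\<^sub>m M))\<^sup>2 = (cmod c)\<^sup>2 * (frob_norm M)\<^sup>2"
  using assms frob_norm_sq_eq_sum[of M n m] frob_norm_sq_eq_sum[of "c \<cdot>\<^sub>m M" n m]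
  by (simp add: norm_mult power_mult_distrib sum_distrib_left)

lemma isCont_frob_norm_sq:
  assumes M: "\<And>e. M e \<in> carrier_mat n m"
    and cont: "\<And>i j. i < n \<Longrightarrow> j < m \<Longrightarrow> isCont (\<lambda>e. M e $$ (i, j)) x"
  shows "isCont (\<lambda>e. (frob_norm (M e))\<^sup>2) x"
  unfolding frob_norm_sq_eq_sum[OF M] using cont by (intro continuous_intros) auto

lemma isCont_index_affine_path:
  assumes "A \<in> carrier_mat n m" "D \<in> carrier_mat n m" "i < n" "j < m"
  shows "isCont (\<lambda>e. (A + complex_of_real e \<cdot>\<^sub>m D) $$ (i, j)) x"
proof -
  have "(A + complex_of_real e \<cdot>\<^sub>m D) $$ (i, j) = A $$ (i, j) + complex_of_real e * D $$ (i, j)" for e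
    using assms by simp
  then show ?thesis by (simp only:) (intro continuous_intros)
qed

lemma isCont_index_smult_path:
  fixes M :: "'a :: t2_space \<Rightarrow> complex mat"
  assumes "\<And>e. M e \<in> carrier_mat n m" "isCont c x" "isCont (\<lambda>e. M e $$ (i, j)) x" "i < n" "j < m"
  shows "isCont (\<lambda>e. (c e \<cdot>\<^sub>m M e) $$ (i, j)) x"
proof -
  have "(c e \<cdot>\<^sub>m M e) $$ (i, j) = c e * M e $$ (i, j)" for e
    using assms(1)[of e] assms(4,5) by simp
  then show ?thesis by (simp only:) (intro continuous_intros assms(2,3))
qed

lemma normalized_mem_calY:
  assumes A: "A \<in> carrier_mat 4 4" and B: "B \<in> carrier_mat 4 4"
    and tr: "mat_tr A = 0" "mat_tr B = 0" and N: "0 < (frob_norm A)\<^sup>2 + (frob_norm B)\<^sup>2"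
    and card: "card {z. eigenvalue A z} = 4" "card {z. eigenvalue B z} = 4"
  defines "c \<equiv> complex_of_real (1 / (2 * sqrt ((frob_norm A)\<^sup>2 + (frob_norm B)\<^sup>2)))"
  shows "(c \<cdot>\<^sub>m A, c \<cdot>\<^sub>m B) \<in> calY"
proof -
  have "complex_of_real (1 / (2 * sqrt x)) \<noteq> 0" if "0 < x" for x :: real
    using that by simp
  with N have c: "c \<noteq> 0" unfolding c_def by blast
  have "(frob_norm (c \<cdot>\<^sub>m A))\<^sup>2 + (frob_norm (c \<cdot>\<^sub>m B))\<^sup>2
      = (cmod c)\<^sup>2 * ((frob_norm A)\<^sup>2 + (frob_norm B)\<^sup>2)"
    using frob_norm_smult[OF A] frob_norm_smult[OF B] by (simp add: algebra_simps)
  also have "\<dots> = 1 / 4"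
  proof -
    have "(cmod (complex_of_real (1 / (2 * sqrt x))))\<^sup>2 * x = 1 / 4" if "0 < x" for x :: real
      using that by (simp only: norm_of_real power2_abs) (simp add: power_divide power_mult_distrib)
    with N show ?thesis unfolding c_def by blast
  qed
  finally show ?thesis
    unfolding calY_def calX_def
    using A B tr card c mat_tr_smult[OF A] mat_tr_smult[OF B]
      card_eigenvalues_smult[OF A c] card_eigenvalues_smult[OF B c] by simp
qed

lemma calX_path_into_calY:
  assumes "(A, B) \<in> calX"
  obtains F H :: "real \<Rightarrow> complex mat"
  where "F 0 = A" "H 0 = B" "\<And>e. F e \<in> carrier_mat 4 4" "\<And>e. H e \<in> carrier_mat 4 4"
    "\<And>i j. i < 4 \<Longrightarrow> j < 4 \<Longrightarrow> isCont (\<lambda>e. F e $$ (i, j)) 0"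
    "\<And>i j. i < 4 \<Longrightarrow> j < 4 \<Longrightarrow> isCont (\<lambda>e. H e $$ (i, j)) 0"
    "eventually (\<lambda>e. (F e, H e) \<in> calY) (at 0)"
proof -
  from assms have A: "A \<in> carrier_mat 4 4" and B: "B \<in> carrier_mat 4 4"
    and tr: "mat_tr A = 0" "mat_tr B = 0" and N0: "(frob_norm A)\<^sup>2 + (frob_norm B)\<^sup>2 = 1 / 4"
    unfolding calX_def by auto
  obtain DA where DA: "DA \<in> carrier_mat 4 4" "mat_tr DA = 0"
    and evA: "eventually (\<lambda>e. card {z. eigenvalue (A + complex_of_real e \<cdot>\<^sub>m DA) z} = 4) (at 0)"
    using eventually_card_eigenvalues_perturbation[OF A] by blast
  obtain DB where DB: "DB \<in> carrier_mat 4 4" "mat_tr DB = 0"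
    and evB: "eventually (\<lambda>e. card {z. eigenvalue (B + complex_of_real e \<cdot>\<^sub>m DB) z} = 4) (at 0)"
    using eventually_card_eigenvalues_perturbation[OF B] by blast
  define PA where "PA e = A + complex_of_real e \<cdot>\<^sub>m DA" for e
  define PB where "PB e = B + complex_of_real e \<cdot>\<^sub>m DB" for e
  define N where "N e = (frob_norm (PA e))\<^sup>2 + (frob_norm (PB e))\<^sup>2" for e
  define c where "c e = complex_of_real (1 / (2 * sqrt (N e)))" for e
  have PA: "PA e \<in> carrier_mat 4 4" and PB: "PB e \<in> carrier_mat 4 4" for e
    unfolding PA_def PB_def using A B DA DB by auto
  have contPA: "isCont (\<lambda>e. PA e $$ (i, j)) 0" and contPB: "isCont (\<lambda>e. PB e $$ (i, j)) 0"
    if "i < 4" "j < 4" for i j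
    unfolding PA_def PB_def
    using isCont_index_affine_path[OF A DA(1) that] isCont_index_affine_path[OF B DB(1) that] .
  have PA_0: "PA 0 = A" and PB_0: "PB 0 = B"
    unfolding PA_def PB_def using A B DA DB by auto
  have N_0: "N 0 = 1 / 4" unfolding N_def PA_0 PB_0 using N0 by simp
  have "isCont N 0"
    unfolding N_def by (intro continuous_intros isCont_frob_norm_sq[OF PA contPA] isCont_frob_norm_sq[OF PB contPB])
  then have contc: "isCont c 0" unfolding c_def using N_0 by (intro continuous_intros) auto
  have c_0: "c 0 = 1" unfolding c_def N_0 by (simp add: real_sqrt_divide)
  have trP: "mat_tr (PA e) = 0" "mat_tr (PB e) = 0" for e
    unfolding PA_def PB_def
    using mat_tr_add[OF A smult_carrier_mat[OF DA(1)]] mat_tr_smult[OF DA(1)]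
      mat_tr_add[OF B smult_carrier_mat[OF DB(1)]] mat_tr_smult[OF DB(1)] tr DA(2) DB(2)
    by simp_all
  have "eventually (\<lambda>e. 0 < N e) (at 0)"
    using \<open>isCont N 0\<close> N_0 by (simp add: isCont_def order_tendstoD(1))
  with evA[folded PA_def] evB[folded PB_def]
  have "eventually (\<lambda>e. (c e \<cdot>\<^sub>m PA e, c e \<cdot>\<^sub>m PB e) \<in> calY) (at 0)"
    by eventually_elim (unfold c_def N_def, rule normalized_mem_calY[OF PA PB trP], auto simp: N_def)
  moreover have "isCont (\<lambda>e. (c e \<cdot>\<^sub>m PA e) $$ (i, j)) 0" "isCont (\<lambda>e. (c e \<cdot>\<^sub>m PB e) $$ (i, j)) 0"
    if "i < 4" "j < 4" for i j
    using isCont_index_smult_path[OF PA contc contPA[OF that] that]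
      isCont_index_smult_path[OF PB contc contPB[OF that] that] by auto
  moreover have "c 0 \<cdot>\<^sub>m PA 0 = A" "c 0 \<cdot>\<^sub>m PB 0 = B"
    unfolding c_0 PA_0 PB_0 using A B by auto
  ultimately show ?thesis
    using that[of "\<lambda>e. c e \<cdot>\<^sub>m PA e" "\<lambda>e. c e \<cdot>\<^sub>m PB e"] PA PB by auto
qed

theorem theorem3:
  shows "(\<forall>(A, B) \<in> calX. phi A B \<le> 1/2) \<longleftrightarrow> (\<forall>(A, B) \<in> calY. phi A B \<le> 1/2)"
proof
  assume "\<forall>(A, B) \<in> calX. phi A B \<le> 1/2"
  then show "\<forall>(A, B) \<in> calY. phi A B \<le> 1/2" unfolding calY_def by auto
next
  assume Y: "\<forall>(A, B) \<in> calY. phi A B \<le> 1/2"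
  show "\<forall>(A, B) \<in> calX. phi A B \<le> 1/2"
  proof (clarify, rule ccontr)
    fix A B assume AB: "(A, B) \<in> calX" and "\<not> phi A B \<le> 1/2"
    then have big: "1/2 < phi A B" by simp
    obtain F H :: "real \<Rightarrow> complex mat"
      where FH: "F 0 = A" "H 0 = B" "\<And>e. F e \<in> carrier_mat 4 4" "\<And>e. H e \<in> carrier_mat 4 4"
      and contF: "\<And>i j. i < 4 \<Longrightarrow> j < 4 \<Longrightarrow> isCont (\<lambda>e. F e $$ (i, j)) 0"
      and contH: "\<And>i j. i < 4 \<Longrightarrow> j < 4 \<Longrightarrow> isCont (\<lambda>e. H e $$ (i, j)) 0"
      and evY: "eventually (\<lambda>e. (F e, H e) \<in> calY) (at 0)"
      by (rule calX_path_into_calY[OF AB]) blast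
    have "eventually (\<lambda>e. 1/2 < phi (F e) (H e)) (at 0)"
      by (rule phi_lower_semicontinuous) (use FH contF contH big in auto)
    with evY have "eventually (\<lambda>e. (F e, H e) \<in> calY \<and> 1/2 < phi (F e) (H e)) (at 0)"
      by (rule eventually_conj)
    then obtain e where "(F e, H e) \<in> calY" "1/2 < phi (F e) (H e)"
      using eventually_happens'[OF at_neq_bot] by blast
    with Y show False by auto
  qed
qed

end
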